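(* Let $m$ and $n$ be positive integers divisible by $4$, and let $t\ge 2$ and $r\ge 1$ be integers. Then (i) $\gamma_{tR}(C_m\times C_n)=\frac{mn}{2}$; (ii) $\gamma_{tR}(C_m\times K_{t,t})=2m$; (iii) $\gamma_{tR}(C_m\times P_{C_{3r}})=2mr$; (iv) $\gamma_{tR}(K_{t,t}\times P_{C_{3r}})=8r$.
   Context: $C_k$ is the cycle on $k$ vertices. The prism $P_{C_{3r}}$ over $C_{3r}$ is the Cartesian product $C_{3r}\,\Box\,K_2$ (two disjoint copies of $C_{3r}$ with a perfect matching joining corresponding vertices). A total Roman dominating function on a graph $X$ without isolated vertices is a map $f:V(X)\to\{0,1,2\}$ such that every vertex with label 0 has a neighbor with label 2 and the subgraph induced by vertices with positive labels has no isolated vertices; $\gamma_{tR}(X)$ is the minimum of $\sum_v f(v)$ over such $f$. The direct product $G\times H$ has vertex set $V(G)\times V(H)$, with $(g,h)(g',h')$ an edge iff $gg'\in E(G)$ and $hh'\in E(H)$. *)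

theory Defs
  imports Main
begin

type_synonym 'a graph = "'a set \<times> ('a \<Rightarrow> 'a \<Rightarrow> bool)"

definition verts :: "'a graph \<Rightarrow> 'a set" where "verts G = fst G"
definition adj :: "'a graph \<Rightarrow> 'a \<Rightarrow> 'a \<Rightarrow> bool" where
  "adj G u v \<longleftrightarrow> u \<in> fst G \<and> v \<in> fst G \<and> snd G u v"

text \<open>Cycle C_k on vertices 0..k-1 (meant for k \<ge> 3).\<close>
definition cycle_graph :: "nat \<Rightarrow> nat graph" where
  "cycle_graph k = ({..<k}, \<lambda>i j. i < k \<and> j < k \<and> (j = (i + 1) mod k \<or> i = (j + 1) mod k))"

definition K2 :: "nat graph" where
  "K2 = ({0, 1}, \<lambda>i j. i \<noteq> j)"

text \<open>Complete bipartite graph K_{t,t}: sides False/True, each with t vertices.\<close>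
definition complete_bipartite :: "nat \<Rightarrow> (bool \<times> nat) graph" where
  "complete_bipartite t = ({x. snd x < t}, \<lambda>x y. fst x \<noteq> fst y)"

definition cartesian_prod :: "'a graph \<Rightarrow> 'b graph \<Rightarrow> ('a \<times> 'b) graph" where
  "cartesian_prod G H = (verts G \<times> verts H,
     \<lambda>(g, h) (g', h'). (g = g' \<and> adj H h h') \<or> (h = h' \<and> adj G g g'))"

definition direct_prod :: "'a graph \<Rightarrow> 'b graph \<Rightarrow> ('a \<times> 'b) graph" where
  "direct_prod G H = (verts G \<times> verts H,
     \<lambda>(g, h) (g', h'). adj G g g' \<and> adj H h h')"

definition prism :: "nat \<Rightarrow> (nat \<times> nat) graph" where
  "prism k = cartesian_prod (cycle_graph k) K2"

definition is_trdf :: "'a graph \<Rightarrow> ('a \<Rightarrow> nat) \<Rightarrow> bool" where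
  "is_trdf G f \<longleftrightarrow>
     (\<forall>v \<in> verts G. f v \<le> 2) \<and>
     (\<forall>v \<in> verts G. f v = 0 \<longrightarrow> (\<exists>u. adj G v u \<and> f u = 2)) \<and>
     (\<forall>v \<in> verts G. f v > 0 \<longrightarrow> (\<exists>u. adj G v u \<and> f u > 0))"

definition gamma_tR :: "'a graph \<Rightarrow> nat" where
  "gamma_tR G = (LEAST w. \<exists>f. is_trdf G f \<and> w = (\<Sum>v \<in> verts G. f v))"

end

(* A total Roman dominating function f on a graph of maximum degree k \<ge> 2 has weight at least
   2|V|/k: each vertex labelled 0 has a neighbour labelled 2, and each vertex labelled 2 has a
   positive neighbour, hence at most k - 1 neighbours labelled 0; so |V0| \<le> (k - 1)|V2| and
   2|V| \<le> k (|V1| + 2|V2|).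
   Conversely, if A and B are total dominating sets of G and H, labelling A \<times> B with 2 is a
   total Roman dominating function of G \<times> H of weight 2|A||B|. When the factors have maximum
   degrees a and b, so that G \<times> H has maximum degree at most ab, and a|A| = |V(G)|,
   b|B| = |V(H)| (efficient open domination), the two bounds meet. Such sets are
   {i : i mod 4 \<in> {1, 2}} in C_m for 4 | m, one vertex from each side of K_{t,t}, and both
   copies of {i : i mod 3 = 1} in the prism over C_{3r}. *)
theory Submission
  imports Defs
begin

definition sym_graph :: "'a graph \<Rightarrow> bool" where
  "sym_graph G \<longleftrightarrow> (\<forall>u v. adj G u v \<longrightarrow> adj G v u)"

definition max_degree_le :: "'a graph \<Rightarrow> nat \<Rightarrow> bool" where
  "max_degree_le G k \<longleftrightarrow> (\<forall>v. card {u. adj G v u} \<le> k)"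

definition total_dominating :: "'a graph \<Rightarrow> 'a set \<Rightarrow> bool" where
  "total_dominating G A \<longleftrightarrow> A \<subseteq> verts G \<and> (\<forall>v \<in> verts G. \<exists>a \<in> A. adj G v a)"

subsection \<open>A degree bound for total Roman domination\<close>

lemma adj_in_verts: "adj G u v \<Longrightarrow> u \<in> verts G \<and> v \<in> verts G"
  by (simp add: adj_def verts_def)

lemma finite_neighbours: "finite (verts G) \<Longrightarrow> finite {u. adj G v u}"
  by (rule finite_subset[of _ "verts G"]) (auto dest: adj_in_verts)

lemma trdf_zeros_le:
  assumes fin: "finite (verts G)" and sym: "sym_graph G" and deg: "max_degree_le G k"
    and f: "is_trdf G f"
  shows "card {v \<in> verts G. f v = 0} \<le> (k - 1) * card {v \<in> verts G. f v = 2}"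
proof -
  let ?V0 = "{v \<in> verts G. f v = 0}" and ?V2 = "{v \<in> verts G. f v = 2}"
  have "?V0 \<subseteq> (\<Union>u\<in>?V2. {v. adj G u v} \<inter> ?V0)"
  proof
    fix v assume v: "v \<in> ?V0"
    then obtain u where u: "adj G v u" "f u = 2" using f unfolding is_trdf_def by auto
    then have "u \<in> ?V2" "adj G u v"
      using sym adj_in_verts[of G v u] unfolding sym_graph_def by auto
    then show "v \<in> (\<Union>u\<in>?V2. {v. adj G u v} \<inter> ?V0)" using v by blast
  qed
  then have "card ?V0 \<le> card (\<Union>u\<in>?V2. {v. adj G u v} \<inter> ?V0)"
    using fin by (intro card_mono) (auto simp: finite_neighbours)
  also have "\<dots> \<le> (\<Sum>u\<in>?V2. card ({v. adj G u v} \<inter> ?V0))"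
    using fin by (intro card_UN_le) auto
  also have "\<dots> \<le> (\<Sum>u\<in>?V2. k - 1)"
  proof (rule sum_mono)
    fix u assume u: "u \<in> ?V2"
    then obtain w where w: "adj G u w" "f w > 0" using f unfolding is_trdf_def by auto
    have "card ({v. adj G u v} \<inter> ?V0) \<le> card ({v. adj G u v} - {w})"
      using w fin by (intro card_mono) (auto simp: finite_neighbours)
    also have "\<dots> \<le> k - 1"
      using w deg fin unfolding max_degree_le_def
      by (simp add: card_Diff_singleton finite_neighbours diff_le_mono)
    finally show "card ({v. adj G u v} \<inter> ?V0) \<le> k - 1" .
  qed
  finally show ?thesis by (simp add: mult.commute)
qed

lemma trdf_level_sets:
  assumes fin: "finite (verts G)" and f: "is_trdf G f"
  shows "card (verts G) = card {v \<in> verts G. f v = 0} + card {v \<in> verts G. f v = 1}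
           + card {v \<in> verts G. f v = 2}"
    and "sum f (verts G) = card {v \<in> verts G. f v = 1} + 2 * card {v \<in> verts G. f v = 2}"
proof -
  let ?V = "\<lambda>j. {v \<in> verts G. f v = j}"
  have V: "verts G = ?V 0 \<union> ?V 1 \<union> ?V 2"
    using f unfolding is_trdf_def by force
  have split: "sum h (verts G) = sum h (?V 0) + sum h (?V 1) + sum h (?V 2)" for h :: "'a \<Rightarrow> nat"
    by (subst V) (simp add: sum.union_disjoint fin finite_Collect_conjI disjoint_iff)
  show "card (verts G) = card (?V 0) + card (?V 1) + card (?V 2)"
    using split[of "\<lambda>_. 1"] by simp
  show "sum f (verts G) = card (?V 1) + 2 * card (?V 2)"
    using split[of f] by simp
qed

lemma trdf_weight_lower_bound:
  assumes fin: "finite (verts G)" and sym: "sym_graph G" and deg: "max_degree_le G k"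
    and k: "2 \<le> k" and f: "is_trdf G f"
  shows "2 * card (verts G) \<le> k * sum f (verts G)"
proof -
  define n where "n j = card {v \<in> verts G. f v = j}" for j
  have "n 0 \<le> (k - 1) * n 2" using trdf_zeros_le[OF fin sym deg f] by (simp add: n_def)
  moreover have "2 * n 1 \<le> k * n 1" using k by simp
  ultimately have "2 * (n 0 + n 1 + n 2) \<le> 2 * ((k - 1) * n 2 + n 2) + k * n 1" by arith
  also have "(k - 1) * n 2 + n 2 = k * n 2" using k by (cases k) auto
  finally have "2 * (n 0 + n 1 + n 2) \<le> k * (n 1 + 2 * n 2)" by (simp add: algebra_simps)
  then show ?thesis using trdf_level_sets[OF fin f] by (simp add: n_def)
qed

lemma gamma_tR_eqI:
  assumes "finite (verts G)" "sym_graph G" "max_degree_le G k" "2 \<le> k" "is_trdf G f"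
    and "k * sum f (verts G) \<le> 2 * card (verts G)"
  shows "gamma_tR G = sum f (verts G)"
  unfolding gamma_tR_def
proof (rule Least_equality)
  show "\<exists>g. is_trdf G g \<and> sum f (verts G) = sum g (verts G)" using assms(5) by blast
next
  fix w assume "\<exists>g. is_trdf G g \<and> w = sum g (verts G)"
  then obtain g where "is_trdf G g" "w = sum g (verts G)" by blast
  then have "k * sum f (verts G) \<le> k * w"
    using trdf_weight_lower_bound[OF assms(1-4)] assms(6) order_trans by blast
  then show "sum f (verts G) \<le> w" using assms(4) by simp
qed

subsection \<open>Direct products\<close>

lemma verts_direct_prod: "verts (direct_prod G H) = verts G \<times> verts H"
  unfolding direct_prod_def verts_def by simp

lemma adj_direct_prod: "adj (direct_prod G H) (g, h) (g', h') \<longleftrightarrow> adj G g g' \<and> adj H h h'"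
  unfolding adj_def direct_prod_def verts_def by auto

lemma sym_graph_direct_prod: "sym_graph G \<Longrightarrow> sym_graph H \<Longrightarrow> sym_graph (direct_prod G H)"
  unfolding sym_graph_def by (auto simp: adj_direct_prod)

lemma max_degree_le_direct_prod:
  assumes "finite (verts G)" "finite (verts H)" "max_degree_le G a" "max_degree_le H b"
  shows "max_degree_le (direct_prod G H) (a * b)"
  unfolding max_degree_le_def
proof
  fix v :: "'a \<times> 'b"
  obtain g h where v: "v = (g, h)" by (cases v)
  have "{u. adj (direct_prod G H) v u} = {x. adj G g x} \<times> {y. adj H h y}"
    using v by (auto simp: adj_direct_prod)
  then have "card {u. adj (direct_prod G H) v u} = card {x. adj G g x} * card {y. adj H h y}"
    by (simp add: card_cartesian_product)
  also have "\<dots> \<le> a * b" using assms(3,4) unfolding max_degree_le_def by (simp add: mult_le_mono)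
  finally show "card {u. adj (direct_prod G H) v u} \<le> a * b" .
qed

lemma is_trdf_direct_prod:
  assumes "total_dominating G A" "total_dominating H B"
  shows "is_trdf (direct_prod G H) (\<lambda>v. if v \<in> A \<times> B then 2 else 0)"
  unfolding is_trdf_def
proof (intro conjI ballI impI)
  fix v assume "v \<in> verts (direct_prod G H)"
  then obtain g h where v: "v = (g, h)" "g \<in> verts G" "h \<in> verts H"
    by (auto simp: verts_direct_prod)
  obtain a b where "a \<in> A" "b \<in> B" "adj G g a" "adj H h b"
    using assms v unfolding total_dominating_def by blast
  then have ab: "adj (direct_prod G H) v (a, b)" "(a, b) \<in> A \<times> B"
    using v by (auto simp: adj_direct_prod)
  then show "\<exists>u. adj (direct_prod G H) v u \<and> (if u \<in> A \<times> B then 2 else 0) = (2::nat)"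
    by auto
  show "\<exists>u. adj (direct_prod G H) v u \<and> 0 < (if u \<in> A \<times> B then 2 else 0::nat)"
    using ab by auto
qed auto

lemma sum_indicator_direct_prod:
  assumes "A \<subseteq> verts G" "B \<subseteq> verts H" "finite (verts G)" "finite (verts H)"
  shows "(\<Sum>v \<in> verts (direct_prod G H). if v \<in> A \<times> B then 2 else 0) = 2 * card A * card B"
proof -
  have "A \<times> B \<subseteq> verts G \<times> verts H" using assms(1,2) by auto
  then show ?thesis
    using assms(3,4) by (simp add: verts_direct_prod sum.If_cases Int_absorb1 card_cartesian_product)
qed

lemma gamma_tR_direct_prod:
  assumes fin: "finite (verts G)" "finite (verts H)" and sym: "sym_graph G" "sym_graph H"
    and deg: "max_degree_le G a" "max_degree_le H b" "2 \<le> a * b"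
    and dom: "total_dominating G A" "total_dominating H B"
    and efficient: "a * card A \<le> card (verts G)" "b * card B \<le> card (verts H)"
  shows "gamma_tR (direct_prod G H) = 2 * card A * card B"
proof -
  have "A \<subseteq> verts G" "B \<subseteq> verts H" using dom unfolding total_dominating_def by auto
  note weight = sum_indicator_direct_prod[OF this fin]
  have "a * b * (2 * card A * card B) = 2 * ((a * card A) * (b * card B))" by simp
  also have "\<dots> \<le> 2 * card (verts (direct_prod G H))"
    using efficient by (simp add: verts_direct_prod card_cartesian_product mult_le_mono)
  finally show ?thesis
    using gamma_tR_eqI[OF _ sym_graph_direct_prod[OF sym] max_degree_le_direct_prod[OF fin deg(1,2)]
        deg(3) is_trdf_direct_prod[OF dom]] weight fin
    by (simp add: verts_direct_prod)
qed

subsection \<open>Cycles\<close>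

lemma verts_cycle_graph: "verts (cycle_graph m) = {..<m}"
  unfolding verts_def cycle_graph_def by simp

lemma adj_cycle_graph:
  "adj (cycle_graph m) i j \<longleftrightarrow> i < m \<and> j < m \<and> (j = (i + 1) mod m \<or> i = (j + 1) mod m)"
  unfolding adj_def cycle_graph_def by auto

lemma sym_graph_cycle_graph: "sym_graph (cycle_graph m)"
  unfolding sym_graph_def adj_cycle_graph by auto

lemma max_degree_le_cycle_graph: "max_degree_le (cycle_graph m) 2"
  unfolding max_degree_le_def
proof
  fix i
  have "{j. adj (cycle_graph m) i j} \<subseteq> {(i + 1) mod m, (i + m - 1) mod m}"
  proof
    fix j assume "j \<in> {j. adj (cycle_graph m) i j}"
    then have "j < m" "j = (i + 1) mod m \<or> i = (j + 1) mod m" unfolding adj_cycle_graph by auto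
    then show "j \<in> {(i + 1) mod m, (i + m - 1) mod m}" by (cases "j + 1 = m") auto
  qed
  then have "card {j. adj (cycle_graph m) i j} \<le> card {(i + 1) mod m, (i + m - 1) mod m}"
    by (intro card_mono) auto
  also have "\<dots> \<le> 2" by (simp add: card_insert_if)
  finally show "card {j. adj (cycle_graph m) i j} \<le> 2" .
qed

lemma card_residues_below:
  assumes "S \<subseteq> {..<c}"
  shows "card {i. i < c * q \<and> i mod c \<in> S} = q * card S"
proof -
  have "{i. i < c * q \<and> i mod c \<in> S} = (\<lambda>(k, s). c * k + s) ` ({..<q} \<times> S)"
  proof (intro equalityI subsetI)
    fix i assume i: "i \<in> {i. i < c * q \<and> i mod c \<in> S}"
    then have "i div c < q" by (simp add: less_mult_imp_div_less mult.commute)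
    with i show "i \<in> (\<lambda>(k, s). c * k + s) ` ({..<q} \<times> S)"
      by (intro image_eqI[of _ _ "(i div c, i mod c)"]) auto
  next
    fix i assume "i \<in> (\<lambda>(k, s). c * k + s) ` ({..<q} \<times> S)"
    then obtain k s where "i = c * k + s" "k < q" "s \<in> S" by auto
    moreover have "c * k + s < c * q" if "k < q" "s < c"
    proof -
      have "c * k + s < c * (k + 1)" using that by simp
      also have "\<dots> \<le> c * q" using that by (intro mult_le_mono2) simp
      finally show ?thesis .
    qed
    ultimately show "i \<in> {i. i < c * q \<and> i mod c \<in> S}" using assms by auto
  qed
  moreover have "inj_on (\<lambda>(k, s). c * k + s) ({..<q} \<times> S)"
  proof (rule inj_onI, clarsimp)
    fix k s k' s' assume "s \<in> S" "s' \<in> S" and eq: "c * k + s = c * k' + s'"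
    then have "s < c" "s' < c" using assms by auto
    then have "(c * k + s) div c = k \<and> (c * k + s) mod c = s"
      and "(c * k' + s') div c = k' \<and> (c * k' + s') mod c = s'" by simp_all
    then show "k = k' \<and> s = s'" using eq by simp
  qed
  ultimately show ?thesis by (simp add: card_image card_cartesian_product)
qed

definition cycle_dominating_set :: "nat \<Rightarrow> nat set" where
  "cycle_dominating_set m = {i. i < m \<and> i mod 4 \<in> {1, 2}}"

lemma card_cycle_dominating_set:
  assumes "4 dvd m"
  shows "card (cycle_dominating_set m) = m div 2"
proof -
  obtain q where q: "m = 4 * q" using assms by blast
  have "card {i. i < 4 * q \<and> i mod 4 \<in> {1, 2}} = q * card {1, 2 :: nat}"
    by (rule card_residues_below) auto
  then show ?thesis unfolding cycle_dominating_set_def q by simp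
qed

lemma total_dominating_cycle_graph:
  assumes "4 dvd m"
  shows "total_dominating (cycle_graph m) (cycle_dominating_set m)"
  unfolding total_dominating_def
proof (intro conjI ballI)
  show "cycle_dominating_set m \<subseteq> verts (cycle_graph m)"
    unfolding cycle_dominating_set_def verts_cycle_graph by auto
next
  fix i assume "i \<in> verts (cycle_graph m)"
  then have i: "i < m" by (simp add: verts_cycle_graph)
  obtain q where q: "m = 4 * q" using assms by blast
  show "\<exists>a \<in> cycle_dominating_set m. adj (cycle_graph m) i a"
  proof (cases "i mod 4 < 2")
    case True
    then have "i + 1 < m" "(i + 1) mod 4 = 1 \<or> (i + 1) mod 4 = 2" using i q by presburger+
    then show ?thesis
      unfolding cycle_dominating_set_def adj_cycle_graph using i by (intro bexI[of _ "i + 1"]) auto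
  next
    case False
    then obtain j where j: "i = j + 1" by (cases i) auto
    with False have "j mod 4 = 1 \<or> j mod 4 = 2" by presburger
    then show ?thesis
      unfolding cycle_dominating_set_def adj_cycle_graph using i j by (intro bexI[of _ j]) auto
  qed
qed

subsection \<open>Complete bipartite graphs\<close>

lemma verts_complete_bipartite: "verts (complete_bipartite t) = UNIV \<times> {..<t}"
  unfolding verts_def complete_bipartite_def by auto

lemma adj_complete_bipartite:
  "adj (complete_bipartite t) x y \<longleftrightarrow> snd x < t \<and> snd y < t \<and> fst x \<noteq> fst y"
  unfolding adj_def complete_bipartite_def by auto

lemma sym_graph_complete_bipartite: "sym_graph (complete_bipartite t)"
  unfolding sym_graph_def adj_complete_bipartite by auto

lemma max_degree_le_complete_bipartite: "max_degree_le (complete_bipartite t) t"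
  unfolding max_degree_le_def
proof
  fix x :: "bool \<times> nat"
  have "{y. adj (complete_bipartite t) x y} \<subseteq> {\<not> fst x} \<times> {..<t}"
    by (auto simp: adj_complete_bipartite)
  from card_mono[OF _ this] show "card {y. adj (complete_bipartite t) x y} \<le> t"
    by (simp add: card_cartesian_product)
qed

lemma total_dominating_complete_bipartite:
  "0 < t \<Longrightarrow> total_dominating (complete_bipartite t) {(False, 0), (True, 0)}"
  unfolding total_dominating_def verts_complete_bipartite adj_complete_bipartite by auto

subsection \<open>Prisms\<close>

lemma verts_cartesian_prod: "verts (cartesian_prod G H) = verts G \<times> verts H"
  unfolding cartesian_prod_def verts_def by simp

lemma adj_cartesian_prod:
  "adj (cartesian_prod G H) (g, h) (g', h') \<longleftrightarrow>
     (g = g' \<and> g \<in> verts G \<and> adj H h h') \<or> (h = h' \<and> h \<in> verts H \<and> adj G g g')"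
  unfolding cartesian_prod_def adj_def verts_def by auto

lemma sym_graph_cartesian_prod:
  "sym_graph G \<Longrightarrow> sym_graph H \<Longrightarrow> sym_graph (cartesian_prod G H)"
  unfolding sym_graph_def by (auto simp: adj_cartesian_prod)

lemma max_degree_le_cartesian_prod:
  assumes "finite (verts G)" "finite (verts H)" "max_degree_le G a" "max_degree_le H b"
  shows "max_degree_le (cartesian_prod G H) (a + b)"
  unfolding max_degree_le_def
proof
  fix v :: "'a \<times> 'b"
  obtain g h where v: "v = (g, h)" by (cases v)
  let ?A = "{g} \<times> {y. adj H h y}" and ?B = "{x. adj G g x} \<times> {h}"
  have "{u. adj (cartesian_prod G H) v u} \<subseteq> ?A \<union> ?B"
    using v by (auto simp: adj_cartesian_prod)
  moreover have "finite (?A \<union> ?B)" using assms(1,2) by (simp add: finite_neighbours)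
  ultimately have "card {u. adj (cartesian_prod G H) v u} \<le> card (?A \<union> ?B)"
    by (simp add: card_mono)
  also have "\<dots> \<le> card ?A + card ?B" by (rule card_Un_le)
  also have "\<dots> \<le> a + b"
    using assms(3,4) unfolding max_degree_le_def
    by (simp add: card_cartesian_product add.commute add_mono)
  finally show "card {u. adj (cartesian_prod G H) v u} \<le> a + b" .
qed

lemma verts_K2: "verts K2 = {0, 1}"
  unfolding verts_def K2_def by simp

lemma adj_K2: "adj K2 i j \<longleftrightarrow> i \<in> {0, 1} \<and> j \<in> {0, 1} \<and> i \<noteq> j"
  unfolding adj_def K2_def by auto

lemma sym_graph_K2: "sym_graph K2"
  unfolding sym_graph_def adj_K2 by auto

lemma max_degree_le_K2: "max_degree_le K2 1"
  unfolding max_degree_le_def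
proof
  fix i
  have "{j. adj K2 i j} \<subseteq> {1 - i}" by (auto simp: adj_K2)
  from card_mono[OF _ this] show "card {j. adj K2 i j} \<le> 1" by simp
qed

lemma verts_prism: "verts (prism k) = {..<k} \<times> {0, 1}"
  unfolding prism_def by (simp add: verts_cartesian_prod verts_cycle_graph verts_K2)

lemma sym_graph_prism: "sym_graph (prism k)"
  unfolding prism_def by (intro sym_graph_cartesian_prod sym_graph_cycle_graph sym_graph_K2)

lemma max_degree_le_prism: "max_degree_le (prism k) 3"
  using max_degree_le_cartesian_prod[OF _ _ max_degree_le_cycle_graph max_degree_le_K2]
  unfolding prism_def by (simp add: verts_cycle_graph verts_K2)

definition prism_dominating_set :: "nat \<Rightarrow> (nat \<times> nat) set" where
  "prism_dominating_set k = {i. i < k \<and> i mod 3 = 1} \<times> {0, 1}"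

lemma card_prism_dominating_set: "card (prism_dominating_set (3 * r)) = 2 * r"
proof -
  have "card {i. i < 3 * r \<and> i mod 3 \<in> {1}} = r * card {1 :: nat}"
    by (rule card_residues_below) auto
  then show ?thesis unfolding prism_dominating_set_def by (simp add: card_cartesian_product)
qed

lemma total_dominating_prism: "total_dominating (prism (3 * r)) (prism_dominating_set (3 * r))"
  unfolding total_dominating_def
proof (intro conjI ballI)
  show "prism_dominating_set (3 * r) \<subseteq> verts (prism (3 * r))"
    unfolding prism_dominating_set_def verts_prism by auto
next
  fix x assume "x \<in> verts (prism (3 * r))"
  then obtain i s where x: "x = (i, s)" "i < 3 * r" "s \<in> {0, 1}" by (auto simp: verts_prism)
  have rung: "adj (prism (3 * r)) (i, s) (i, 1 - s)"
    using x unfolding prism_def by (auto simp: adj_cartesian_prod verts_cycle_graph adj_K2)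
  have cycle_edge: "adj (prism (3 * r)) (i, s) (j, s)" if "adj (cycle_graph (3 * r)) i j" for j
    using x that unfolding prism_def by (auto simp: adj_cartesian_prod verts_K2)
  consider "i mod 3 = 0" | "i mod 3 = 1" | "i mod 3 = 2" by arith
  then show "\<exists>a \<in> prism_dominating_set (3 * r). adj (prism (3 * r)) x a"
  proof cases
    case 1
    then have "i + 1 < 3 * r" "(i + 1) mod 3 = 1" using x(2) by presburger+
    then show ?thesis
      using x cycle_edge[of "i + 1"] unfolding prism_dominating_set_def adj_cycle_graph
      by (intro bexI[of _ "(i + 1, s)"]) auto
  next
    case 2
    then show ?thesis
      using x rung unfolding prism_dominating_set_def by (intro bexI[of _ "(i, 1 - s)"]) auto
  next
    case 3
    then obtain j where j: "i = j + 1" by (cases i) auto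
    with 3 have "j mod 3 = 1" by presburger
    then show ?thesis
      using x j cycle_edge[of j] unfolding prism_dominating_set_def adj_cycle_graph
      by (intro bexI[of _ "(j, s)"]) auto
  qed
qed

theorem corollary4p6:
  fixes m n t r :: nat
  assumes "m > 0" "4 dvd m" "n > 0" "4 dvd n" "t \<ge> 2" "r \<ge> 1"
  shows "gamma_tR (direct_prod (cycle_graph m) (cycle_graph n)) = m * n div 2 \<and>
         gamma_tR (direct_prod (cycle_graph m) (complete_bipartite t)) = 2 * m \<and>
         gamma_tR (direct_prod (cycle_graph m) (prism (3 * r))) = 2 * m * r \<and>
         gamma_tR (direct_prod (complete_bipartite t) (prism (3 * r))) = 8 * r"
proof -
  obtain a b where m: "m = 4 * a" and n: "n = 4 * b" using assms(2,4) by blast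
  note cycle = verts_cycle_graph sym_graph_cycle_graph max_degree_le_cycle_graph
    total_dominating_cycle_graph card_cycle_dominating_set
  note bipartite = verts_complete_bipartite sym_graph_complete_bipartite
    max_degree_le_complete_bipartite total_dominating_complete_bipartite
  note prism = verts_prism sym_graph_prism max_degree_le_prism total_dominating_prism
    card_prism_dominating_set
  have "gamma_tR (direct_prod (cycle_graph m) (cycle_graph n)) = 2 * (m div 2) * (n div 2)"
    using assms
    by (subst gamma_tR_direct_prod[where a = 2 and b = 2
          and A = "cycle_dominating_set m" and B = "cycle_dominating_set n"])
       (simp_all add: cycle)
  moreover have "gamma_tR (direct_prod (cycle_graph m) (complete_bipartite t)) = 2 * (m div 2) * 2"
    using assms
    by (subst gamma_tR_direct_prod[where a = 2 and b = t
          and A = "cycle_dominating_set m" and B = "{(False, 0), (True, 0)}"])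
       (simp_all add: cycle bipartite)
  moreover have "gamma_tR (direct_prod (cycle_graph m) (prism (3 * r))) = 2 * (m div 2) * (2 * r)"
    using assms
    by (subst gamma_tR_direct_prod[where a = 2 and b = 3
          and A = "cycle_dominating_set m" and B = "prism_dominating_set (3 * r)"])
       (simp_all add: cycle prism)
  moreover have "gamma_tR (direct_prod (complete_bipartite t) (prism (3 * r))) = 2 * 2 * (2 * r)"
    using assms
    by (subst gamma_tR_direct_prod[where a = t and b = 3
          and A = "{(False, 0), (True, 0)}" and B = "prism_dominating_set (3 * r)"])
       (simp_all add: bipartite prism)
  ultimately show ?thesis unfolding m n by simp
qed

end
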